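(* Let $(X,d)$ be a compact metric space and $f_{1,\infty}=\{f_n\}_{n=1}^\infty$ a sequence of continuous self-maps of $X$. If the induced non-autonomous system $(\mathcal{M}(X),\widetilde{f}_{1,\infty})$ is topologically transitive, then $(X,f_{1,\infty})$ satisfies Banks's condition.
   Context: For a sequence $f_{1,\infty}=\{f_n\}_{n\ge1}$ of continuous self-maps of $X$, write $f_1^n=f_n\circ\cdots\circ f_1$ and $f_1^{-n}=(f_1^n)^{-1}$ (preimage). $\mathcal{M}(X)$ is the space of Borel probability measures on $X$ with the weak$^*$ topology (equivalently the Prohorov metric), and the induced system $(\mathcal{M}(X),\widetilde{f}_{1,\infty})$ is given by $\widetilde{f}_1^n(\mu)(A)=\mu(f_1^{-n}(A))$ for Borel $A$ (push-forward). A non-autonomous system $(Y,g_{1,\infty})$ is topologically transitive if for every pair of non-empty open sets $U,V$ there is $n\in\mathbb{N}$ with $g_1^n(U)\cap V\ne\emptyset$. $(X,f_{1,\infty})$ satisfies Banks's condition if for any three non-empty open sets $U,V,W\subseteq X$ there is $n\in\mathbb{N}$ with $f_1^n(U)\cap V\neq\emptyset$ and $f_1^n(U)\cap W\ne\emptyset$. *)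

theory Defs
  imports "HOL-Probability.Probability"
begin

text \<open>Non-autonomous composition: comp_seq f n = f n o ... o f 1 (f 0 is unused), comp_seq f 0 = id.\<close>
primrec comp_seq :: "(nat \<Rightarrow> 'a \<Rightarrow> 'a) \<Rightarrow> nat \<Rightarrow> 'a \<Rightarrow> 'a" where
  "comp_seq f 0 = id"
| "comp_seq f (Suc n) = f (Suc n) \<circ> comp_seq f n"

text \<open>The space M(X) of Borel probability measures on X (X = the whole type).\<close>
definition prob_measures :: "'a::metric_space measure set" where
  "prob_measures = {\<mu>. sets \<mu> = sets borel \<and> prob_space \<mu>}"

definition weak_star_topology :: "'a::metric_space measure topology" where
  "weak_star_topology = topology_generated_by
     {{\<mu> \<in> prob_measures. (\<integral>x. g x \<partial>\<mu>) \<in> W} | g W. continuous_on UNIV g \<and> open (W::real set)}"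

definition induced_map :: "('a::metric_space \<Rightarrow> 'a) \<Rightarrow> 'a measure \<Rightarrow> 'a measure" where
  "induced_map h \<mu> = distr \<mu> borel h"

definition banks_condition :: "(nat \<Rightarrow> 'a::topological_space \<Rightarrow> 'a) \<Rightarrow> bool" where
  "banks_condition f \<longleftrightarrow> (\<forall>U V W. open U \<and> U \<noteq> {} \<and> open V \<and> V \<noteq> {} \<and> open W \<and> W \<noteq> {} \<longrightarrow>
     (\<exists>n\<ge>1. comp_seq f n ` U \<inter> V \<noteq> {} \<and> comp_seq f n ` U \<inter> W \<noteq> {}))"

definition induced_transitive :: "(nat \<Rightarrow> 'a::metric_space \<Rightarrow> 'a) \<Rightarrow> bool" where
  "induced_transitive f \<longleftrightarrow> (\<forall>U V. openin weak_star_topology U \<and> U \<noteq> {} \<and>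
     openin weak_star_topology V \<and> V \<noteq> {} \<longrightarrow>
     (\<exists>n\<ge>1. induced_map (comp_seq f n) ` U \<inter> V \<noteq> {}))"

end

theory Submission
  imports Defs
begin

text \<open>Test against tent functions supported in balls inside U, V, W. The measures giving the
  U-tent mass above 2/3 form a nonempty weak* open set (it contains the Dirac mass at the centre),
  and so do the measures giving both the V-tent and the W-tent mass above 1/3. Transitivity yields
  a measure mu of the first set whose push-forward under F = f_1^n lies in the second. Then
  tent_U + tent_V o F has mu-integral above 1, and since both summands are bounded by 1 some point
  makes both positive: it lies in U and is sent by F into V; likewise for W.\<close>

definition tent :: "'a::metric_space \<Rightarrow> real \<Rightarrow> 'a \<Rightarrow> real" where
  "tent c r x = max 0 (1 - dist x c / r)"

lemma continuous_on_tent: "r > 0 \<Longrightarrow> continuous_on UNIV (tent c r)"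
  unfolding tent_def by (intro continuous_intros) auto

lemma tent_nonneg: "tent c r x \<ge> 0"
  unfolding tent_def by simp

lemma tent_le_one: "r > 0 \<Longrightarrow> tent c r x \<le> 1"
  unfolding tent_def by simp

lemma tent_centre [simp]: "tent c r c = 1"
  unfolding tent_def by simp

lemma tent_pos_imp_mem_ball: "r > 0 \<Longrightarrow> tent c r x > 0 \<Longrightarrow> x \<in> ball c r"
  unfolding tent_def by (auto simp: dist_commute max_def split: if_splits)

lemma open_nonempty_contains_ball:
  assumes "open S" "S \<noteq> {}"
  obtains c r where "r > 0" "ball c r \<subseteq> S"
  using assms open_contains_ball by blast

lemma openin_weak_star_integral_preimage:
  assumes "continuous_on UNIV g" "open (W::real set)"
  shows "openin weak_star_topology {\<mu> \<in> prob_measures. (\<integral>x. g x \<partial>\<mu>) \<in> W}"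
  unfolding weak_star_topology_def openin_topology_generated_by_iff
  by (rule generate_topology_on.Basis) (use assms in blast)

lemma prob_measuresD:
  assumes "\<mu> \<in> prob_measures"
  shows "prob_space \<mu>" "sets \<mu> = sets borel"
  using assms by (auto simp: prob_measures_def)

lemma return_in_prob_measures: "return borel x \<in> prob_measures"
  by (simp add: prob_measures_def prob_space_return)

lemma continuous_imp_measurable_prob_measures:
  assumes "\<mu> \<in> prob_measures" "continuous_on UNIV g"
  shows "g \<in> borel_measurable \<mu>"
  using borel_measurable_continuous_onI[OF assms(2)]
    measurable_cong_sets[OF prob_measuresD(2)[OF assms(1)] refl] by blast

lemma integrable_bounded_continuous_prob_measures:
  fixes g :: "'a::metric_space \<Rightarrow> real"
  assumes "\<mu> \<in> prob_measures" "continuous_on UNIV g" "\<And>x. \<bar>g x\<bar> \<le> B"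
  shows "integrable \<mu> g"
  using prob_space.finite_measure[OF prob_measuresD(1)[OF assms(1)]] assms(3)
    continuous_imp_measurable_prob_measures[OF assms(1,2)]
  by (intro finite_measure.integrable_const_bound[where B=B]) auto

lemma exists_gt_of_integral_gt:
  fixes g :: "'a::metric_space \<Rightarrow> real"
  assumes "\<mu> \<in> prob_measures" "continuous_on UNIV g" "\<And>x. \<bar>g x\<bar> \<le> B"
    and "(\<integral>x. g x \<partial>\<mu>) > c"
  shows "\<exists>x. g x > c"
proof (rule ccontr)
  assume "\<nexists>x. g x > c"
  then have "\<And>x. g x \<le> c" by (simp add: not_less)
  have ps: "prob_space \<mu>" using prob_measuresD(1)[OF assms(1)] .
  have "(\<integral>x. g x \<partial>\<mu>) \<le> (\<integral>x. c \<partial>\<mu>)"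
    using \<open>\<And>x. g x \<le> c\<close> integrable_bounded_continuous_prob_measures[OF assms(1-3)]
      finite_measure.integrable_const[OF prob_space.finite_measure[OF ps]]
    by (intro integral_mono) auto
  also have "\<dots> = c" using ps by (simp add: prob_space.prob_space)
  finally show False using assms(4) by simp
qed

lemma exists_both_pos_of_integral_sum_gt_one:
  fixes g h :: "'a::metric_space \<Rightarrow> real"
  assumes \<mu>: "\<mu> \<in> prob_measures"
    and cont: "continuous_on UNIV g" "continuous_on UNIV h"
    and bounds: "\<And>x. 0 \<le> g x \<and> g x \<le> 1" "\<And>x. 0 \<le> h x \<and> h x \<le> 1"
    and gt: "(\<integral>x. g x \<partial>\<mu>) + (\<integral>x. h x \<partial>\<mu>) > 1"
  shows "\<exists>x. g x > 0 \<and> h x > 0"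
proof -
  have "(\<integral>x. g x + h x \<partial>\<mu>) = (\<integral>x. g x \<partial>\<mu>) + (\<integral>x. h x \<partial>\<mu>)"
    using bounds
    by (intro Bochner_Integration.integral_add integrable_bounded_continuous_prob_measures[OF \<mu>, where B=1])
      (auto intro: cont simp: abs_le_iff)
  moreover have "\<bar>g x + h x\<bar> \<le> 2" for x
    using bounds(1)[of x] bounds(2)[of x] by linarith
  ultimately have "\<exists>x. g x + h x > 1"
    using gt by (intro exists_gt_of_integral_gt[OF \<mu>, where B=2]) (auto intro!: continuous_intros cont)
  then obtain x where "g x + h x > 1" by blast
  then show ?thesis using bounds(1)[of x] bounds(2)[of x] by (intro exI[of _ x]) linarith
qed

lemma integral_induced_map:
  assumes "\<mu> \<in> prob_measures" "continuous_on UNIV F" "continuous_on UNIV (g :: 'a::metric_space \<Rightarrow> real)"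
  shows "(\<integral>x. g x \<partial>induced_map F \<mu>) = (\<integral>x. g (F x) \<partial>\<mu>)"
  unfolding induced_map_def
  by (rule integral_distr[OF continuous_imp_measurable_prob_measures[OF assms(1,2)]
        borel_measurable_continuous_onI[OF assms(3)]])

lemma continuous_on_comp_seq:
  assumes "\<And>n. n \<ge> 1 \<Longrightarrow> continuous_on UNIV (f n)"
  shows "continuous_on UNIV (comp_seq f n)"
proof (induction n)
  case (Suc n)
  have "continuous_on UNIV (f (Suc n))" using assms by simp
  with Suc show ?case
    by (metis comp_seq.simps(2) continuous_on_compose continuous_on_subset subset_UNIV)
qed (simp add: continuous_on_id)

definition tent_mass_above :: "'a::metric_space \<Rightarrow> real \<Rightarrow> real \<Rightarrow> 'a measure set" where
  "tent_mass_above c r a = {\<mu> \<in> prob_measures. (\<integral>x. tent c r x \<partial>\<mu>) > a}"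

lemma openin_tent_mass_above:
  assumes "r > 0"
  shows "openin weak_star_topology (tent_mass_above c r a)"
  using openin_weak_star_integral_preimage[OF continuous_on_tent[OF assms], of "{a<..}" c]
  by (simp add: tent_mass_above_def)

lemma return_in_tent_mass_above:
  assumes "r > 0" "a < 1"
  shows "return borel c \<in> tent_mass_above c r a"
  using assms by (simp add: tent_mass_above_def return_in_prob_measures integral_return
      continuous_on_tent borel_measurable_continuous_onI)

text \<open>The uniform distribution on the two centres gives each tent mass at least 1/2.\<close>
lemma tent_mass_above_Int_nonempty:
  assumes "r > 0" "s > 0" "a < 1/2"
  shows "tent_mass_above v r a \<inter> tent_mass_above w s a \<noteq> {}"
proof -
  define S where "S = {v, w}"
  have S: "finite S" "S \<noteq> {}" "card S \<le> 2" by (auto simp: S_def card_insert_if)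
  define \<nu> where "\<nu> = distr (measure_pmf (pmf_of_set S)) borel id"
  have "\<nu> \<in> prob_measures"
    unfolding prob_measures_def \<nu>_def by (auto intro!: measure_pmf.prob_space_distr)
  moreover have "(\<integral>x. tent c q x \<partial>\<nu>) \<ge> 1/2" if "q > 0" "c \<in> S" for c q
  proof -
    have "sum (tent c q) S \<ge> tent c q c"
      using S that(2) by (intro member_le_sum) (auto simp: tent_nonneg)
    then have "sum (tent c q) S \<ge> 1" by simp
    have "(\<integral>x. tent c q x \<partial>\<nu>) = sum (tent c q) S / card S"
      unfolding \<nu>_def using S
      by (subst integral_distr) (auto intro: borel_measurable_continuous_onI[OF continuous_on_tent[OF that(1)]]
          simp: integral_pmf_of_set)
    also have "\<dots> \<ge> 1 / 2"
      using S \<open>sum (tent c q) S \<ge> 1\<close> by (intro frac_le) (auto simp: card_gt_0_iff)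
    finally show ?thesis .
  qed
  ultimately have "\<nu> \<in> tent_mass_above v r a \<inter> tent_mass_above w s a"
    using assms by (fastforce simp: tent_mass_above_def S_def)
  then show ?thesis by blast
qed

lemma image_ball_meets_ball_if_push_forward_in_tent_mass_above:
  assumes F: "continuous_on UNIV F" and "r > 0" "s > 0" "a + b \<ge> 1"
    and u: "\<mu> \<in> tent_mass_above u r a"
    and v: "induced_map F \<mu> \<in> tent_mass_above v s b"
  shows "F ` ball u r \<inter> ball v s \<noteq> {}"
proof -
  have \<mu>: "\<mu> \<in> prob_measures" using u by (simp add: tent_mass_above_def)
  have cont: "continuous_on UNIV (\<lambda>x. tent v s (F x))"
    using continuous_on_compose2[OF continuous_on_tent[OF \<open>s > 0\<close>] F] by simp
  have "(\<integral>x. tent v s (F x) \<partial>\<mu>) > b"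
    using v integral_induced_map[OF \<mu> F continuous_on_tent[OF \<open>s > 0\<close>]]
    by (simp add: tent_mass_above_def)
  moreover have "(\<integral>x. tent u r x \<partial>\<mu>) > a" using u by (simp add: tent_mass_above_def)
  ultimately have "\<exists>x. tent u r x > 0 \<and> tent v s (F x) > 0"
    using tent_nonneg tent_le_one \<open>r > 0\<close> \<open>s > 0\<close> \<open>a + b \<ge> 1\<close>
    by (intro exists_both_pos_of_integral_sum_gt_one[OF \<mu> continuous_on_tent[OF \<open>r > 0\<close>] cont]) auto
  then obtain x where "tent u r x > 0" "tent v s (F x) > 0" by blast
  then show ?thesis
    using tent_pos_imp_mem_ball \<open>r > 0\<close> \<open>s > 0\<close> by blast
qed

theorem theorem3p4:
  fixes f :: "nat \<Rightarrow> 'a::metric_space \<Rightarrow> 'a"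
  assumes "compact (UNIV :: 'a set)"
    and "\<And>n. n \<ge> 1 \<Longrightarrow> continuous_on UNIV (f n)"
    and "induced_transitive f"
  shows "banks_condition f"
  unfolding banks_condition_def
proof (intro allI impI, elim conjE)
  fix U V W :: "'a set"
  assume "open U" "U \<noteq> {}" "open V" "V \<noteq> {}" "open W" "W \<noteq> {}"
  then obtain u r v s w t where "r > 0" "ball u r \<subseteq> U" "s > 0" "ball v s \<subseteq> V" "t > 0" "ball w t \<subseteq> W"
    by (meson open_nonempty_contains_ball)
  define A where "A = tent_mass_above u r (2/3)"
  define B where "B = tent_mass_above v s (1/3) \<inter> tent_mass_above w t (1/3)"
  have "openin weak_star_topology A" "openin weak_star_topology B" "A \<noteq> {}" "B \<noteq> {}"
    unfolding A_def B_def using \<open>r > 0\<close> \<open>s > 0\<close> \<open>t > 0\<close> return_in_tent_mass_above[of r "2/3" u] tent_mass_above_Int_nonempty[of s t "1/3" v w]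
    by (auto intro: openin_Int openin_tent_mass_above)
  then obtain n \<mu> where "n \<ge> 1" "\<mu> \<in> A" "induced_map (comp_seq f n) \<mu> \<in> B"
    using assms(3) unfolding induced_transitive_def by blast
  moreover have "continuous_on UNIV (comp_seq f n)"
    using assms(2) by (rule continuous_on_comp_seq)
  ultimately have "comp_seq f n ` ball u r \<inter> ball v s \<noteq> {}" "comp_seq f n ` ball u r \<inter> ball w t \<noteq> {}"
    using image_ball_meets_ball_if_push_forward_in_tent_mass_above[of "comp_seq f n" r _ "2/3" "1/3"]
      \<open>r > 0\<close> \<open>s > 0\<close> \<open>t > 0\<close> unfolding A_def B_def by auto
  then show "\<exists>n\<ge>1. comp_seq f n ` U \<inter> V \<noteq> {} \<and> comp_seq f n ` U \<inter> W \<noteq> {}"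
    using \<open>n \<ge> 1\<close> \<open>ball u r \<subseteq> U\<close> \<open>ball v s \<subseteq> V\<close> \<open>ball w t \<subseteq> W\<close> by blast
qed

end
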